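(* Let $k \geq 3$ and let $F$ be a $k$-edge graph with $\gamma(F)=1$. Let $\Gamma_1$ be a pure $(m_1,F)$-special graph and $\Gamma_2$ a pure $(m_2,F)$-special graph with $V(\Gamma_1)\cap V(\Gamma_2) = \emptyset$. Let $x \in V(\Gamma_1)$, $y \in V(\Gamma_2)$, let $\Gamma$ be the graph with vertex set $V(\Gamma_1)\cup V(\Gamma_2)$ and edge set $E(\Gamma_1)\cup E(\Gamma_2)\cup\{xy\}$, and let $m = |E(\Gamma)|$. If $\iota(\Gamma,F) = \frac{m+1}{k+2}$, then $\Gamma$ is an $(m,F)$-special graph.
   Context: All graphs are finite and simple. For $D \subseteq V(G)$, $N_G[D]$ is the closed neighbourhood of $D$. A set $D \subseteq V(G)$ is an $F$-isolating set of $G$ if $G - N_G[D]$ contains no subgraph isomorphic to $F$; $\iota(G,F)$ is the minimum size of such a set. $\gamma(F)=1$ means $F$ has a vertex adjacent to all other vertices of $F$. ($m,F$)-special graphs: let $F$ be a connected $k$-edge graph. Write $m+1 = q(k+2)+r$ with integers $q \ge 0$, $0 \le r \le k+1$. If $q = 0$, an $(m,F)$-special graph is any connected $m$-edge graph. If $q \geq 1$, take distinct vertices $v_1,\dots,v_q$, copies $F_1,\dots,F_q$ of $F$ such that $V(F_1),\dots,V(F_q),\{v_1,\dots,v_q\}$ are pairwise disjoint, vertices $w_i \in V(F_i)$, and let $G_i$ be the graph with vertex set $\{v_i\}\cup V(F_i)$ and edge set $E(F_i)\cup\{v_iw_i\}$. Let $T$ be a tree with vertex set $\{v_1,\dots,v_q\}$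 (the quotient graph) and $T'$ a connected $r$-edge graph with $V(T') \cap \bigcup_i V(G_i) = \{v_q\}$ (the remainder graph). The graph with vertex set $V(T')\cup\bigcup_i V(G_i)$ and edge set $E(T)\cup E(T')\cup \bigcup_i E(G_i)$ is an $(m,F)$-special graph. It is pure if $q\ge1$ and $T'$ has no edges (so $m+1=q(k+2)$). *)

theory Defs
  imports Complex_Main
begin

type_synonym 'a graph = "'a set \<times> 'a set set"

definition verts :: "'a graph \<Rightarrow> 'a set" where "verts G = fst G"
definition edges :: "'a graph \<Rightarrow> 'a set set" where "edges G = snd G"

definition graph :: "'a graph \<Rightarrow> bool" where
  "graph G \<longleftrightarrow> finite (verts G) \<and>
     (\<forall>e\<in>edges G. \<exists>u v. e = {u, v} \<and> u \<noteq> v \<and> u \<in> verts G \<and> v \<in> verts G)"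

definition adj_rel :: "'a graph \<Rightarrow> ('a \<times> 'a) set" where
  "adj_rel G = {(u, v). {u, v} \<in> edges G}"

definition connected_graph :: "'a graph \<Rightarrow> bool" where
  "connected_graph G \<longleftrightarrow> verts G \<noteq> {} \<and>
     (\<forall>u\<in>verts G. \<forall>v\<in>verts G. (u, v) \<in> (adj_rel G)\<^sup>*)"

definition acyclic_graph :: "'a graph \<Rightarrow> bool" where
  "acyclic_graph G \<longleftrightarrow> \<not> (\<exists>cs. length cs \<ge> 3 \<and> distinct cs \<and> set cs \<subseteq> verts G \<and>
     (\<forall>i<length cs. {cs ! i, cs ! ((i + 1) mod length cs)} \<in> edges G))"

definition tree :: "'a graph \<Rightarrow> bool" where
  "tree G \<longleftrightarrow> connected_graph G \<and> acyclic_graph G"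

definition iso :: "'a graph \<Rightarrow> 'b graph \<Rightarrow> bool" where
  "iso G H \<longleftrightarrow> (\<exists>f. bij_betw f (verts G) (verts H) \<and>
     (\<forall>u\<in>verts G. \<forall>v\<in>verts G. {u, v} \<in> edges G \<longleftrightarrow> {f u, f v} \<in> edges H))"

definition contains_copy :: "'a graph \<Rightarrow> 'b graph \<Rightarrow> bool" where
  "contains_copy G F \<longleftrightarrow> (\<exists>f. inj_on f (verts F) \<and> f ` verts F \<subseteq> verts G \<and>
     (\<forall>e\<in>edges F. f ` e \<in> edges G))"

definition closed_nbhd :: "'a graph \<Rightarrow> 'a set \<Rightarrow> 'a set" where
  "closed_nbhd G D = D \<union> {v \<in> verts G. \<exists>u\<in>D. {u, v} \<in> edges G}"

definition del_verts :: "'a graph \<Rightarrow> 'a set \<Rightarrow> 'a graph" where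
  "del_verts G X = (verts G - X, {e \<in> edges G. e \<subseteq> verts G - X})"

definition isolating :: "'a graph \<Rightarrow> 'b graph \<Rightarrow> 'a set \<Rightarrow> bool" where
  "isolating G F D \<longleftrightarrow> D \<subseteq> verts G \<and>
     \<not> contains_copy (del_verts G (closed_nbhd G D)) F"

definition iota :: "'a graph \<Rightarrow> 'b graph \<Rightarrow> nat" where
  "iota G F = (LEAST n. \<exists>D. isolating G F D \<and> card D = n)"

definition dom_one :: "'b graph \<Rightarrow> bool" where
  "dom_one F \<longleftrightarrow> (\<exists>c\<in>verts F. \<forall>u\<in>verts F - {c}. {c, u} \<in> edges F)"

text \<open>The construction of an (m,F)-special graph with parameters q \<ge> 1 and r
  (indices 0..q-1 instead of 1..q; so v_q becomes v (q-1)).\<close>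
definition special_constr :: "nat \<Rightarrow> 'b graph \<Rightarrow> 'a graph \<Rightarrow> nat \<Rightarrow> nat \<Rightarrow> bool" where
  "special_constr m F G q r \<longleftrightarrow>
     q \<ge> 1 \<and> r \<le> card (edges F) + 1 \<and> m + 1 = q * (card (edges F) + 2) + r \<and>
     (\<exists>v Fs w T T'.
        inj_on v {..<q} \<and>
        (\<forall>i<q. graph (Fs i) \<and> iso (Fs i) F \<and> w i \<in> verts (Fs i)) \<and>
        (\<forall>i<q. \<forall>j<q. i \<noteq> j \<longrightarrow> verts (Fs i) \<inter> verts (Fs j) = {}) \<and>
        (\<forall>i<q. \<forall>j<q. v j \<notin> verts (Fs i)) \<and>
        graph T \<and> tree T \<and> verts T = v ` {..<q} \<and>
        graph T' \<and> connected_graph T' \<and> card (edges T') = r \<and>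
        verts T' \<inter> (\<Union>i<q. insert (v i) (verts (Fs i))) = {v (q - 1)} \<and>
        G = (verts T' \<union> (\<Union>i<q. insert (v i) (verts (Fs i))),
             edges T \<union> edges T' \<union> (\<Union>i<q. insert {v i, w i} (edges (Fs i)))))"

definition special :: "nat \<Rightarrow> 'b graph \<Rightarrow> 'a graph \<Rightarrow> bool" where
  "special m F G \<longleftrightarrow>
     (m + 1 < card (edges F) + 2 \<and> graph G \<and> connected_graph G \<and> card (edges G) = m) \<or>
     (\<exists>q r. special_constr m F G q r)"

definition pure_special :: "nat \<Rightarrow> 'b graph \<Rightarrow> 'a graph \<Rightarrow> bool" where
  "pure_special m F G \<longleftrightarrow> (\<exists>q. special_constr m F G q 0)"

end

theory Submission
  imports Defs
begin

text \<open>
  Write \<open>\<Gamma>1\<close> and \<open>\<Gamma>2\<close> as pure special graphs with q1 and q2 units (a copy of F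
  hung by one edge from a vertex of the quotient tree). Then m + 1 \<ge> (q1 + q2)(k + 2), so the
  hypothesis gives \<open>\<iota>(\<Gamma>, F) \<ge> q1 + q2\<close>.

  Every copy of F lies in the closed neighbourhood of the image of its dominating vertex, so a set
  D is F-isolating as soon as N[D] meets xy and every edge of both quotient trees, and every unit
  loses two of its k + 1 edges. Hence, if x lay in a copy of F, the roots of all units except those
  containing x and y, together with y, would form an F-isolating set of size q1 + q2 - 1. The
  only exception is a single-unit \<open>\<Gamma>1\<close> whose unit still contains a copy of F after deleting x;
  that copy is then isomorphic to F and \<open>\<Gamma>1\<close> can be redecomposed with x as the root.

  So x and y may be taken as roots. The two quotient trees joined by xy give a pure special
  decomposition of \<open>\<Gamma>\<close> with q1 + q2 units, whose roots isolate F; therefore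
  m + 1 = (q1 + q2)(k + 2) and \<open>\<Gamma>\<close> is (m, F)-special.
\<close>

section \<open>Graphs, copies and isomorphisms\<close>

lemma graph_edgeE:
  assumes "graph G" "e \<in> edges G"
  obtains u v where "e = {u, v}" "u \<noteq> v" "u \<in> verts G" "v \<in> verts G"
  using assms unfolding graph_def by blast

lemma graph_edge_subset: "graph G \<Longrightarrow> e \<in> edges G \<Longrightarrow> e \<subseteq> verts G"
  by (auto elim: graph_edgeE)

lemma graph_doubleton_edge:
  "graph G \<Longrightarrow> {a, b} \<in> edges G \<Longrightarrow> a \<noteq> b \<and> a \<in> verts G \<and> b \<in> verts G"
  by (erule graph_edgeE) (auto simp: doubleton_eq_iff)

lemma graph_edge_nonempty: "graph G \<Longrightarrow> e \<in> edges G \<Longrightarrow> e \<noteq> {}"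
  by (auto elim: graph_edgeE)

lemma verts_pair [simp]: "verts (V, E) = V"
  by (simp add: verts_def)

lemma edges_pair [simp]: "edges (V, E) = E"
  by (simp add: edges_def)

lemma finite_verts: "graph G \<Longrightarrow> finite (verts G)"
  by (simp add: graph_def)

lemma finite_edges:
  assumes "graph G" shows "finite (edges G)"
proof -
  have "edges G \<subseteq> Pow (verts G)" using graph_edge_subset[OF assms] by blast
  then show ?thesis using finite_verts[OF assms] by (rule finite_subset[OF _ finite_Pow_iff[THEN iffD2]])
qed

lemma verts_del_verts [simp]: "verts (del_verts G X) = verts G - X"
  by (simp add: del_verts_def)

lemma edges_del_verts [simp]: "edges (del_verts G X) = {e \<in> edges G. e \<subseteq> verts G - X}"
  by (simp add: del_verts_def)

lemma closed_nbhd_subset: "D \<subseteq> closed_nbhd G D"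
  by (simp add: closed_nbhd_def)

lemma closed_nbhd_neighbour: "u \<in> D \<Longrightarrow> {u, t} \<in> edges G \<Longrightarrow> t \<in> verts G \<Longrightarrow> t \<in> closed_nbhd G D"
  unfolding closed_nbhd_def by blast

lemma iota_le: "isolating G F D \<Longrightarrow> iota G F \<le> card D"
  unfolding iota_def by (rule Least_le) blast

lemma contains_copy_mono:
  assumes "contains_copy G F" "verts G \<subseteq> verts G'" "edges G \<subseteq> edges G'"
  shows "contains_copy G' F"
proof -
  obtain f where "inj_on f (verts F)" "f ` verts F \<subseteq> verts G" "\<forall>e\<in>edges F. f ` e \<in> edges G"
    using assms(1) unfolding contains_copy_def by blast
  then show ?thesis unfolding contains_copy_def using assms(2,3) by (intro exI[of _ f]) auto
qed

lemma contains_copy_del_verts_antimono: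
  assumes "contains_copy (del_verts G N') F" "N \<subseteq> N'"
  shows "contains_copy (del_verts G N) F"
proof (rule contains_copy_mono[OF assms(1)])
  show "verts (del_verts G N') \<subseteq> verts (del_verts G N)" using assms(2) by auto
  show "edges (del_verts G N') \<subseteq> edges (del_verts G N)" using assms(2) by auto
qed

lemma card_edges_le_if_contains_copy:
  assumes "contains_copy G F" "graph F" "finite (edges G)"
  shows "card (edges F) \<le> card (edges G)"
proof -
  obtain f where f: "inj_on f (verts F)" "\<forall>e\<in>edges F. f ` e \<in> edges G"
    using assms(1) unfolding contains_copy_def by blast
  have "inj_on ((`) f) (edges F)"
    using graph_edge_subset[OF assms(2)] by (intro inj_on_subset[OF inj_on_image_Pow[OF f(1)]]) blast
  moreover have "(`) f ` edges F \<subseteq> edges G" using f(2) by blast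
  ultimately show ?thesis by (rule card_inj_on_le[OF _ _ assms(3)])
qed

lemma iso_sym:
  assumes "iso G H" shows "iso H G"
proof -
  obtain f where f: "bij_betw f (verts G) (verts H)"
    "\<forall>u\<in>verts G. \<forall>v\<in>verts G. {u, v} \<in> edges G \<longleftrightarrow> {f u, f v} \<in> edges H"
    using assms unfolding iso_def by blast
  let ?g = "inv_into (verts G) f"
  have g: "bij_betw ?g (verts H) (verts G)" using f(1) by (rule bij_betw_inv_into)
  have "{a, b} \<in> edges H \<longleftrightarrow> {?g a, ?g b} \<in> edges G" if "a \<in> verts H" "b \<in> verts H" for a b
    using f that bij_betw_inv_into_right[OF f(1)] bij_betwE[OF g] by metis
  then show ?thesis unfolding iso_def using g by blast
qed

lemma contains_copy_if_iso:
  assumes "iso G H" "graph G" shows "contains_copy H G"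
proof -
  obtain f where f: "bij_betw f (verts G) (verts H)"
    "\<forall>u\<in>verts G. \<forall>v\<in>verts G. {u, v} \<in> edges G \<longleftrightarrow> {f u, f v} \<in> edges H"
    using assms(1) unfolding iso_def by blast
  have "f ` e \<in> edges H" if e: "e \<in> edges G" for e
  proof -
    obtain u v where "e = {u, v}" "u \<in> verts G" "v \<in> verts G"
      using graph_edgeE[OF assms(2) e] by blast
    then show ?thesis using e f(2) by simp
  qed
  then show ?thesis
    unfolding contains_copy_def using f(1) by (auto simp: bij_betw_def)
qed

lemma iso_card_edges:
  assumes "iso G H" "graph G" "graph H"
  shows "card (edges G) = card (edges H)"
  using card_edges_le_if_contains_copy[OF contains_copy_if_iso[OF assms(1,2)] assms(2)]
    card_edges_le_if_contains_copy[OF contains_copy_if_iso[OF iso_sym[OF assms(1)] assms(3)] assms(3)]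
    finite_edges[OF assms(2)] finite_edges[OF assms(3)] by (simp add: le_antisym)

lemma iso_card_verts: "iso G H \<Longrightarrow> card (verts G) = card (verts H)"
  unfolding iso_def using bij_betw_same_card by blast

lemma iso_if_contains_copy:
  assumes "contains_copy L F" "graph L" "graph F"
    and "card (verts L) = card (verts F)" "card (edges L) \<le> card (edges F)"
  shows "iso L F"
proof -
  obtain f where f: "inj_on f (verts F)" "f ` verts F \<subseteq> verts L" "\<forall>e\<in>edges F. f ` e \<in> edges L"
    using assms(1) unfolding contains_copy_def by blast
  have "card (f ` verts F) = card (verts L)" using card_image[OF f(1)] assms(4) by simp
  then have "f ` verts F = verts L" by (rule card_subset_eq[OF finite_verts[OF assms(2)] f(2)])
  then have bij: "bij_betw f (verts F) (verts L)" using f(1) by (simp add: bij_betw_def)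
  have inj: "inj_on ((`) f) (edges F)"
    using graph_edge_subset[OF assms(3)] by (intro inj_on_subset[OF inj_on_image_Pow[OF f(1)]]) blast
  have "(`) f ` edges F \<subseteq> edges L" using f(3) by blast
  moreover have "card (edges L) \<le> card ((`) f ` edges F)" using card_image[OF inj] assms(5) by simp
  ultimately have img: "(`) f ` edges F = edges L" by (rule card_seteq[OF finite_edges[OF assms(2)]])
  have "{u, v} \<in> edges F \<longleftrightarrow> {f u, f v} \<in> edges L" if uv: "u \<in> verts F" "v \<in> verts F" for u v
  proof
    assume "{u, v} \<in> edges F"
    then show "{f u, f v} \<in> edges L" using f(3) by force
  next
    assume "{f u, f v} \<in> edges L"
    then have "f ` {u, v} \<in> (`) f ` edges F" using img by simp
    then obtain e where e: "e \<in> edges F" "f ` {u, v} = f ` e" by blast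
    have "e \<subseteq> verts F" by (rule graph_edge_subset[OF assms(3) e(1)])
    then have "{u, v} = e" using inj_on_image_eq_iff[OF f(1), of "{u, v}" e] e(2) uv by blast
    then show "{u, v} \<in> edges F" using e(1) by simp
  qed
  then show ?thesis using iso_sym bij unfolding iso_def by blast
qed

lemma dom_one_iso:
  assumes "iso G F" "dom_one F" shows "dom_one G"
proof -
  obtain f where f: "bij_betw f (verts G) (verts F)"
    "\<forall>u\<in>verts G. \<forall>v\<in>verts G. {u, v} \<in> edges G \<longleftrightarrow> {f u, f v} \<in> edges F"
    using assms(1) unfolding iso_def by blast
  obtain c where c: "c \<in> verts F" "\<forall>u\<in>verts F - {c}. {c, u} \<in> edges F"
    using assms(2) unfolding dom_one_def by blast
  obtain c' where c': "c' \<in> verts G" "f c' = c" using f(1) c(1) by (metis bij_betw_def imageE)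
  have "{c', u} \<in> edges G" if u: "u \<in> verts G - {c'}" for u
  proof -
    have "f u \<in> verts F - {c}"
      using u c' f(1) by (auto simp: bij_betw_def inj_on_eq_iff)
    then show ?thesis using c(2) f(2) c'(1) u by (auto simp: c'(2))
  qed
  then show ?thesis unfolding dom_one_def using c'(1) by blast
qed

lemma dom_one_centre:
  assumes "dom_one G"
  obtains c where "c \<in> verts G" "\<And>u. u \<in> verts G \<Longrightarrow> u \<noteq> c \<Longrightarrow> {c, u} \<in> edges G"
  using assms unfolding dom_one_def by blast

lemma dom_one_edge_at:
  assumes "graph G" "dom_one G" "edges G \<noteq> {}" "u \<in> verts G"
  obtains z where "{u, z} \<in> edges G"
proof -
  obtain c where c: "c \<in> verts G" "\<And>t. t \<in> verts G \<Longrightarrow> t \<noteq> c \<Longrightarrow> {c, t} \<in> edges G"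
    using dom_one_centre[OF assms(2)] by blast
  obtain p s where ps: "{p, s} \<in> edges G" "p \<noteq> s" "p \<in> verts G" "s \<in> verts G"
    using assms(1,3) by (metis ex_in_conv graph_edgeE)
  show ?thesis
  proof (cases "u = c")
    case True
    then have "{u, p} \<in> edges G \<or> {u, s} \<in> edges G"
      using c(2) ps by (cases "p = c") auto
    then show ?thesis using that by blast
  next
    case False
    then have "{u, c} \<in> edges G" using c(2)[OF assms(4)] by (simp add: insert_commute)
    then show ?thesis by (rule that)
  qed
qed

lemma dom_one_other_edge:
  assumes "graph G" "dom_one G" "2 \<le> card (edges G)" "{y, z} \<in> edges G"
  obtains e where "e \<in> edges G" "e \<noteq> {y, z}" "y \<in> e \<or> z \<in> e"
proof -
  obtain c where c: "c \<in> verts G" "\<And>t. t \<in> verts G \<Longrightarrow> t \<noteq> c \<Longrightarrow> {c, t} \<in> edges G"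
    using dom_one_centre[OF assms(2)] by blast
  have yz: "y \<noteq> z" "y \<in> verts G" "z \<in> verts G" using graph_doubleton_edge[OF assms(1,4)] by auto
  have "edges G \<noteq> {{y, z}}" using assms(3) by auto
  then obtain e' where "e' \<in> edges G" "e' \<noteq> {y, z}" using assms(4) by blast
  then obtain p where p: "p \<in> verts G" "p \<noteq> y" "p \<noteq> z"
    using assms(1) by (elim graph_edgeE) auto
  show ?thesis
  proof (cases "c = y \<or> c = z")
    case True
    then have "{c, p} \<in> edges G" "{c, p} \<noteq> {y, z}" "y \<in> {c, p} \<or> z \<in> {c, p}"
      using c(2)[OF p(1)] p by (auto simp: doubleton_eq_iff)
    then show ?thesis by (rule that)
  next
    case False
    then have "{c, y} \<in> edges G" "{c, y} \<noteq> {y, z}" "y \<in> {c, y}"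
      using c(2)[OF yz(2)] by (auto simp: doubleton_eq_iff)
    then show ?thesis using that by blast
  qed
qed

text \<open>A copy of F lies in the closed neighbourhood of the image of a dominating
  vertex, so it suffices to exclude copies near each vertex.\<close>

lemma not_contains_copy_if_local:
  assumes "graph F" "dom_one F"
    and local: "\<And>c. c \<in> verts H \<Longrightarrow> \<exists>S. c \<in> S \<and> (\<forall>u. {c, u} \<in> edges H \<longrightarrow> u \<in> S) \<and>
              \<not> contains_copy (verts H \<inter> S, {e \<in> edges H. e \<subseteq> S}) F"
  shows "\<not> contains_copy H F"
proof
  assume "contains_copy H F"
  then obtain f where f: "inj_on f (verts F)" "f ` verts F \<subseteq> verts H" "\<forall>e\<in>edges F. f ` e \<in> edges H"
    unfolding contains_copy_def by blast
  obtain c where c: "c \<in> verts F" "\<And>u. u \<in> verts F \<Longrightarrow> u \<noteq> c \<Longrightarrow> {c, u} \<in> edges F"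
    using dom_one_centre[OF assms(2)] by blast
  obtain S where S: "f c \<in> S" "\<forall>u. {f c, u} \<in> edges H \<longrightarrow> u \<in> S"
    "\<not> contains_copy (verts H \<inter> S, {e \<in> edges H. e \<subseteq> S}) F"
    using local f(2) c(1) by blast
  have inS: "f u \<in> S" if "u \<in> verts F" for u
    using S(1,2) f(3) c(2)[OF that] by (cases "u = c") auto
  have "f ` e \<subseteq> S" if "e \<in> edges F" for e
    using inS graph_edge_subset[OF assms(1) that] by blast
  then have "contains_copy (verts H \<inter> S, {e \<in> edges H. e \<subseteq> S}) F"
    unfolding contains_copy_def using f inS by (intro exI[of _ f]) auto
  then show False using S(3) by blast
qed

section \<open>Trees\<close>

lemma adj_rel_mono: "edges G \<subseteq> edges H \<Longrightarrow> adj_rel G \<subseteq> adj_rel H"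
  unfolding adj_rel_def by blast

lemma connected_card_verts_le:
  assumes G: "graph G" and conn: "connected_graph G"
  shows "card (verts G) \<le> card (edges G) + 1"
proof -
  obtain r where r: "r \<in> verts G" using conn unfolding connected_graph_def by auto
  let ?R = "adj_rel G"
  define d where "d u = (LEAST n. (r, u) \<in> ?R ^^ n)" for u
  have path: "(r, u) \<in> ?R ^^ d u" if "u \<in> verts G" for u
  proof -
    have "(r, u) \<in> ?R\<^sup>*" using conn r that unfolding connected_graph_def by blast
    then show ?thesis unfolding d_def by (metis LeastI_ex rtrancl_imp_relpow)
  qed
  txt \<open>Every vertex other than r has a neighbour closer to r; these parent edges are distinct.\<close>
  have "\<exists>z. {z, u} \<in> edges G \<and> d z < d u" if u: "u \<in> verts G - {r}" for u
  proof -
    obtain n where n: "d u = Suc n" using path[of u] u by (cases "d u") auto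
    then obtain z where z: "(r, z) \<in> ?R ^^ n" "(z, u) \<in> ?R" using path[of u] u by auto
    have "d z \<le> n" unfolding d_def using z(1) by (rule Least_le)
    then show ?thesis using z(2) n unfolding adj_rel_def by auto
  qed
  then obtain p where p: "\<And>u. u \<in> verts G - {r} \<Longrightarrow> {p u, u} \<in> edges G \<and> d (p u) < d u"
    by metis
  have "inj_on (\<lambda>u. {p u, u}) (verts G - {r})"
  proof (rule inj_onI)
    fix u u' assume u: "u \<in> verts G - {r}" and u': "u' \<in> verts G - {r}" and eq: "{p u, u} = {p u', u'}"
    show "u = u'"
    proof (rule ccontr)
      assume "u \<noteq> u'"
      then have "p u = u'" "p u' = u" using eq by (auto simp: doubleton_eq_iff)
      then show False using p[OF u] p[OF u'] by simp
    qed
  qed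
  moreover have "(\<lambda>u. {p u, u}) ` (verts G - {r}) \<subseteq> edges G" using p by blast
  ultimately have "card (verts G - {r}) \<le> card (edges G)"
    using card_inj_on_le finite_edges[OF G] by blast
  then show ?thesis using r finite_verts[OF G] by simp
qed

lemma connected_without_edges:
  assumes "connected_graph G" "edges G = {}" "a \<in> verts G"
  shows "verts G = {a}"
proof -
  have "adj_rel G = {}" using assms(2) by (simp add: adj_rel_def)
  then show ?thesis using assms(1,3) unfolding connected_graph_def by auto
qed

definition cycle_on :: "'a set set \<Rightarrow> 'a list \<Rightarrow> bool" where
  "cycle_on E cs \<longleftrightarrow> 3 \<le> length cs \<and> distinct cs \<and>
     (\<forall>i<length cs. {cs ! i, cs ! ((i + 1) mod length cs)} \<in> E)"

lemma acyclic_graph_iff: "acyclic_graph G \<longleftrightarrow> (\<nexists>cs. set cs \<subseteq> verts G \<and> cycle_on (edges G) cs)"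
  unfolding acyclic_graph_def cycle_on_def by blast

lemma cycle_on_mono: "cycle_on E cs \<Longrightarrow> E \<subseteq> E' \<Longrightarrow> cycle_on E' cs"
  unfolding cycle_on_def by blast

lemma cycle_on_restrict:
  assumes "cycle_on E cs" "set cs \<subseteq> A" shows "cycle_on {e \<in> E. e \<subseteq> A} cs"
proof -
  have "cs ! i \<in> A" if "i < length cs" for i using assms(2) that nth_mem by blast
  moreover have "(i + 1) mod length cs < length cs" if "i < length cs" for i
    using that by (auto intro!: mod_less_divisor)
  ultimately show ?thesis using assms(1) unfolding cycle_on_def by auto
qed

lemma cyclic_index_change:
  fixes n :: nat
  assumes "a < n" "P a" "b < n" "\<not> P b"
  shows "\<exists>i<n. P i \<and> \<not> P ((i + 1) mod n)"
proof (rule ccontr)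
  assume "\<not> ?thesis"
  then have step: "P i \<Longrightarrow> i < n \<Longrightarrow> P ((i + 1) mod n)" for i by blast
  have "P ((a + t) mod n)" for t
  proof (induction t)
    case (Suc t)
    then show ?case using step[of "(a + t) mod n"] assms(1) by (simp add: mod_Suc_eq)
  qed (use assms in simp)
  from this[of "b + n - a"] show False using assms by simp
qed

text \<open>A cycle leaving a vertex set A must also return to it; if only one edge crosses the
  boundary of A, the cycle would traverse it twice.\<close>

lemma cycle_on_one_crossing:
  assumes cyc: "cycle_on E cs"
    and cross: "\<And>e. e \<in> E \<Longrightarrow> e \<subseteq> A \<or> e \<inter> A = {} \<or> e = {x, y}"
  shows "set cs \<subseteq> A \<or> set cs \<inter> A = {}"
proof (rule ccontr)
  let ?n = "length cs" and ?nx = "\<lambda>i. (i + 1) mod length cs"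
  assume "\<not> ?thesis"
  then obtain a b where ab: "a < ?n" "cs ! a \<in> A" "b < ?n" "cs ! b \<notin> A"
    by (auto simp: in_set_conv_nth)
  have n3: "3 \<le> ?n" and dist: "distinct cs" and edge: "\<And>i. i < ?n \<Longrightarrow> {cs ! i, cs ! ?nx i} \<in> E"
    using cyc unfolding cycle_on_def by auto
  obtain i where i: "i < ?n" "cs ! i \<in> A" "cs ! ?nx i \<notin> A"
    using cyclic_index_change[of a ?n "\<lambda>i. cs ! i \<in> A" b] ab by blast
  obtain j where j: "j < ?n" "cs ! j \<notin> A" "cs ! ?nx j \<in> A"
    using cyclic_index_change[of b ?n "\<lambda>i. cs ! i \<notin> A" a] ab by blast
  have "{cs ! i, cs ! ?nx i} = {x, y}" "{cs ! j, cs ! ?nx j} = {x, y}"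
    using cross[OF edge[OF i(1)]] cross[OF edge[OF j(1)]] i j by auto
  then have "cs ! i = cs ! ?nx j" "cs ! ?nx i = cs ! j"
    using i(2,3) j(2,3) by (auto simp: doubleton_eq_iff)
  moreover have "?nx i < ?n" "?nx j < ?n" using n3 by (auto intro!: mod_less_divisor)
  ultimately have "i = ?nx j" "?nx i = j"
    using dist i(1) j(1) by (simp_all add: nth_eq_iff_index_eq)
  then have "Suc (Suc i) mod ?n = i" by (metis Suc_eq_plus1 mod_Suc_eq)
  then show False using i(1) n3 by (cases "Suc (Suc i) < ?n") (auto simp: le_mod_geq)
qed

lemma connected_join:
  assumes C1: "connected_graph T1" and C2: "connected_graph T2"
    and x: "x \<in> verts T1" and y: "y \<in> verts T2"
    and T: "T = (verts T1 \<union> verts T2, edges T1 \<union> edges T2 \<union> {{x, y}})"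
  shows "connected_graph T"
proof -
  let ?R = "adj_rel T"
  have R1: "(adj_rel T1)\<^sup>* \<subseteq> ?R\<^sup>*" and R2: "(adj_rel T2)\<^sup>* \<subseteq> ?R\<^sup>*"
    using T by (auto intro!: rtrancl_mono adj_rel_mono)
  have xy: "(x, y) \<in> ?R" "(y, x) \<in> ?R" using T unfolding adj_rel_def by (auto simp: insert_commute)
  have to_x: "(u, x) \<in> ?R\<^sup>*" and from_x: "(x, u) \<in> ?R\<^sup>*" if u: "u \<in> verts T" for u
  proof -
    consider "u \<in> verts T1" | "u \<in> verts T2" using u T by auto
    then have "(u, x) \<in> ?R\<^sup>* \<and> (x, u) \<in> ?R\<^sup>*"
    proof cases
      case 1
      then show ?thesis using C1 x R1 unfolding connected_graph_def by blast
    next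
      case 2
      then have "(u, y) \<in> ?R\<^sup>*" "(y, u) \<in> ?R\<^sup>*" using C2 y R2 unfolding connected_graph_def by blast+
      then show ?thesis using xy by (meson converse_rtrancl_into_rtrancl rtrancl_into_rtrancl)
    qed
    then show "(u, x) \<in> ?R\<^sup>*" "(x, u) \<in> ?R\<^sup>*" by blast+
  qed
  have "verts T \<noteq> {}" using x T by auto
  then show ?thesis
    unfolding connected_graph_def using to_x from_x by (meson rtrancl_trans)
qed

lemma acyclic_join:
  assumes G1: "graph T1" "acyclic_graph T1" and G2: "graph T2" "acyclic_graph T2"
    and disj: "verts T1 \<inter> verts T2 = {}" and x: "x \<in> verts T1" and y: "y \<in> verts T2"
    and T: "T = (verts T1 \<union> verts T2, edges T1 \<union> edges T2 \<union> {{x, y}})"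
  shows "acyclic_graph T"
  unfolding acyclic_graph_iff
proof
  assume "\<exists>cs. set cs \<subseteq> verts T \<and> cycle_on (edges T) cs"
  then obtain cs where cs: "set cs \<subseteq> verts T" "cycle_on (edges T) cs" by blast
  have edge: "e \<in> edges T1 \<or> e \<in> edges T2 \<or> e = {x, y}" if "e \<in> edges T" for e
    using that T by auto
  have sub1: "e \<subseteq> verts T1" "e \<noteq> {}" if "e \<in> edges T1" for e
    using graph_edge_subset[OF G1(1) that] graph_edge_nonempty[OF G1(1) that] by simp_all
  have sub2: "e \<subseteq> verts T2" "e \<noteq> {}" if "e \<in> edges T2" for e
    using graph_edge_subset[OF G2(1) that] graph_edge_nonempty[OF G2(1) that] by simp_all
  have in1: "{e \<in> edges T. e \<subseteq> verts T1} \<subseteq> edges T1"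
  proof
    fix e assume e: "e \<in> {e \<in> edges T. e \<subseteq> verts T1}"
    then have "e \<notin> edges T2" using sub2 disj by blast
    moreover have "e \<noteq> {x, y}" using e disj y by blast
    ultimately show "e \<in> edges T1" using e edge by blast
  qed
  have in2: "{e \<in> edges T. e \<subseteq> verts T2} \<subseteq> edges T2"
  proof
    fix e assume e: "e \<in> {e \<in> edges T. e \<subseteq> verts T2}"
    then have "e \<notin> edges T1" using sub1 disj by blast
    moreover have "e \<noteq> {x, y}" using e disj x by blast
    ultimately show "e \<in> edges T2" using e edge by blast
  qed
  have cut: "e \<subseteq> verts T1 \<or> e \<inter> verts T1 = {} \<or> e = {x, y}" if "e \<in> edges T" for e
    using edge[OF that] sub1(1) sub2(1) disj by blast
  have "set cs \<subseteq> verts T1 \<or> set cs \<subseteq> verts T2"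
    using cycle_on_one_crossing[OF cs(2) cut] cs(1) T by auto
  then have "set cs \<subseteq> verts T1 \<and> cycle_on (edges T1) cs \<or> set cs \<subseteq> verts T2 \<and> cycle_on (edges T2) cs"
    using cycle_on_mono[OF cycle_on_restrict[OF cs(2)] in1] cycle_on_mono[OF cycle_on_restrict[OF cs(2)] in2]
    by blast
  then show False using G1(2) G2(2) unfolding acyclic_graph_iff by blast
qed

lemma graph_join:
  assumes G1: "graph T1" and G2: "graph T2" and xy: "x \<noteq> y" "x \<in> verts T1" "y \<in> verts T2"
    and T: "T = (verts T1 \<union> verts T2, edges T1 \<union> edges T2 \<union> {{x, y}})"
  shows "graph T"
  unfolding graph_def
proof (intro conjI ballI)
  show "finite (verts T)" using T finite_verts[OF G1] finite_verts[OF G2] by simp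
  fix e assume "e \<in> edges T"
  then consider "e \<in> edges T1" | "e \<in> edges T2" | "e = {x, y}" using T by auto
  then show "\<exists>u v. e = {u, v} \<and> u \<noteq> v \<and> u \<in> verts T \<and> v \<in> verts T"
  proof cases
    case 1
    then show ?thesis using T by (elim graph_edgeE[OF G1]) auto
  next
    case 2
    then show ?thesis using T by (elim graph_edgeE[OF G2]) auto
  qed (use xy T in auto)
qed

lemma tree_join:
  assumes T1: "graph T1" "tree T1" and T2: "graph T2" "tree T2"
    and disj: "verts T1 \<inter> verts T2 = {}" and x: "x \<in> verts T1" and y: "y \<in> verts T2"
    and T: "T = (verts T1 \<union> verts T2, edges T1 \<union> edges T2 \<union> {{x, y}})"
  shows "graph T \<and> tree T"
proof -
  have "x \<noteq> y" using disj x y by blast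
  then show ?thesis
    using graph_join[OF T1(1) T2(1) _ x y T] connected_join[OF _ _ x y T]
      acyclic_join[OF T1(1) _ T2(1) _ disj x y T] T1(2) T2(2)
    unfolding tree_def by blast
qed

lemma tree_singleton: "graph ({x}, {}) \<and> tree ({x}, {})"
proof -
  have "length cs \<le> 1" if "set cs \<subseteq> {x}" "distinct cs" for cs :: "'a list"
  proof -
    have "card (set cs) \<le> card {x}" using that(1) by (intro card_mono) auto
    then show ?thesis using distinct_card[OF that(2)] by simp
  qed
  then have "acyclic_graph ({x}, {})" unfolding acyclic_graph_def by fastforce
  moreover have "graph ({x}, {})" unfolding graph_def by simp
  moreover have "connected_graph ({x}, {})" unfolding connected_graph_def by simp
  ultimately show ?thesis unfolding tree_def by blast
qed

section \<open>Pure special graphs\<close>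

definition unit_verts :: "(nat \<Rightarrow> 'a) \<Rightarrow> (nat \<Rightarrow> 'a graph) \<Rightarrow> nat \<Rightarrow> 'a set" where
  "unit_verts v Fs i = insert (v i) (verts (Fs i))"

definition unit_edges :: "(nat \<Rightarrow> 'a) \<Rightarrow> (nat \<Rightarrow> 'a graph) \<Rightarrow> (nat \<Rightarrow> 'a) \<Rightarrow> nat \<Rightarrow> 'a set set" where
  "unit_edges v Fs w i = insert {v i, w i} (edges (Fs i))"

definition unit_graph :: "(nat \<Rightarrow> 'a) \<Rightarrow> (nat \<Rightarrow> 'a graph) \<Rightarrow> (nat \<Rightarrow> 'a) \<Rightarrow> nat \<Rightarrow> 'a graph" where
  "unit_graph v Fs w i = (unit_verts v Fs i, unit_edges v Fs w i)"

text \<open>The data of \<open>special_constr m F G q 0\<close>, whose remainder graph is the single vertex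
  v (q - 1). Unit i, with vertices \<open>unit_verts v Fs i\<close> and edges \<open>unit_edges v Fs w i\<close>, is
  the graph \<open>G\<^sub>i\<close> of the paper (indexed from 0).\<close>

locale pure_decomposition =
  fixes F :: "'b graph" and G :: "'a graph" and q :: nat
    and v :: "nat \<Rightarrow> 'a" and Fs :: "nat \<Rightarrow> 'a graph" and w :: "nat \<Rightarrow> 'a" and T :: "'a graph"
  assumes q_pos: "1 \<le> q"
    and inj_v: "inj_on v {..<q}"
    and copy_graph: "\<And>i. i < q \<Longrightarrow> graph (Fs i)"
    and copy_iso: "\<And>i. i < q \<Longrightarrow> iso (Fs i) F"
    and w_in_copy: "\<And>i. i < q \<Longrightarrow> w i \<in> verts (Fs i)"
    and copies_disjoint: "\<And>i j. i < q \<Longrightarrow> j < q \<Longrightarrow> i \<noteq> j \<Longrightarrow> verts (Fs i) \<inter> verts (Fs j) = {}"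
    and v_notin_copies: "\<And>i j. i < q \<Longrightarrow> j < q \<Longrightarrow> v j \<notin> verts (Fs i)"
    and quotient_tree: "graph T" "tree T" "verts T = v ` {..<q}"
    and G_eq: "G = ((\<Union>i<q. unit_verts v Fs i), edges T \<union> (\<Union>i<q. unit_edges v Fs w i))"
begin

lemma verts_G: "verts G = (\<Union>i<q. unit_verts v Fs i)"
  using G_eq by simp

lemma edges_G: "edges G = edges T \<union> (\<Union>i<q. unit_edges v Fs w i)"
  using G_eq by simp

lemma v_in_unit: "v i \<in> unit_verts v Fs i"
  by (simp add: unit_verts_def)

lemma w_in_unit: "i < q \<Longrightarrow> w i \<in> unit_verts v Fs i"
  using w_in_copy by (simp add: unit_verts_def)

lemma unit_subset_verts: "i < q \<Longrightarrow> unit_verts v Fs i \<subseteq> verts G"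
  using verts_G by blast

lemma unit_edges_subset_edges: "i < q \<Longrightarrow> unit_edges v Fs w i \<subseteq> edges G"
  using edges_G by blast

lemma v_in_verts: "i < q \<Longrightarrow> v i \<in> verts G"
  using unit_subset_verts v_in_unit by blast

lemma image_v_subset: "A \<subseteq> {..<q} \<Longrightarrow> v ` A \<subseteq> verts G"
  using v_in_verts by blast

lemma card_image_v: "A \<subseteq> {..<q} \<Longrightarrow> card (v ` A) = card A"
  using card_image inj_on_subset inj_v by metis

lemma units_disjoint:
  assumes "i < q" "j < q" "i \<noteq> j"
  shows "unit_verts v Fs i \<inter> unit_verts v Fs j = {}"
proof -
  have "v i \<noteq> v j" using inj_v assms by (auto simp: inj_on_eq_iff)
  then show ?thesis
    using copies_disjoint[OF assms] v_notin_copies assms(1,2) by (auto simp: unit_verts_def)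
qed

lemma unit_of_vertex:
  assumes "i < q" "j < q" "a \<in> unit_verts v Fs i" "a \<in> unit_verts v Fs j"
  shows "i = j"
  using units_disjoint assms by blast

lemma card_insert_roots_except:
  assumes "j < q" "a \<in> unit_verts v Fs j"
  shows "card (insert a (v ` ({..<q} - {j}))) = q"
proof -
  have "a \<notin> v ` ({..<q} - {j})"
  proof
    assume "a \<in> v ` ({..<q} - {j})"
    then obtain l where l: "l < q" "l \<noteq> j" "a = v l" by blast
    then show False using unit_of_vertex[OF l(1) assms(1) v_in_unit] assms(2) by simp
  qed
  then show ?thesis using card_image_v[of "{..<q} - {j}"] assms(1) q_pos by simp
qed

lemma hanging_edge_not_in_copy: "i < q \<Longrightarrow> {v i, w i} \<notin> edges (Fs i)"
  using graph_edge_subset[OF copy_graph] v_notin_copies by blast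

lemma unit_edgeE:
  assumes "i < q" "e \<in> unit_edges v Fs w i"
  obtains a b where "e = {a, b}" "a \<noteq> b" "a \<in> unit_verts v Fs i" "b \<in> unit_verts v Fs i"
proof (cases "e = {v i, w i}")
  case True
  moreover have "v i \<noteq> w i" using w_in_copy v_notin_copies assms(1) by metis
  ultimately show ?thesis using that v_in_unit w_in_unit[OF assms(1)] by blast
next
  case False
  then have "e \<in> edges (Fs i)" using assms(2) by (simp add: unit_edges_def)
  then obtain a b where "e = {a, b}" "a \<noteq> b" "a \<in> verts (Fs i)" "b \<in> verts (Fs i)"
    using copy_graph[OF assms(1)] by (elim graph_edgeE)
  then show ?thesis using that by (simp add: unit_verts_def)
qed

lemma unit_edge_subset: "i < q \<Longrightarrow> e \<in> unit_edges v Fs w i \<Longrightarrow> e \<subseteq> unit_verts v Fs i"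
  by (auto elim: unit_edgeE)

lemma unit_edges_del_verts:
  "i < q \<Longrightarrow> edges (del_verts (unit_graph v Fs w i) N) = {e \<in> unit_edges v Fs w i. e \<inter> N = {}}"
  using unit_edge_subset by (auto simp: unit_graph_def)

lemma tree_edgeE:
  assumes "e \<in> edges T"
  obtains i j where "e = {v i, v j}" "i < q" "j < q" "i \<noteq> j"
proof -
  obtain a b where "e = {a, b}" "a \<noteq> b" "a \<in> v ` {..<q}" "b \<in> v ` {..<q}"
    using graph_edgeE[OF quotient_tree(1) assms] quotient_tree(3) by metis
  then show ?thesis using that by blast
qed

lemma tree_neighbour:
  assumes "2 \<le> q" "i < q"
  obtains j where "j < q" "j \<noteq> i" "{v i, v j} \<in> edges T"
proof -
  define j :: nat where "j = (if i = 0 then 1 else 0)"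
  have j: "j < q" "j \<noteq> i" using assms by (auto simp: j_def)
  then have "v i \<noteq> v j" using inj_v assms(2) by (auto simp: inj_on_eq_iff)
  moreover have "(v i, v j) \<in> (adj_rel T)\<^sup>*"
    using quotient_tree assms(2) j(1) unfolding tree_def connected_graph_def by blast
  ultimately obtain t where "(v i, t) \<in> adj_rel T" by (metis converse_rtranclE)
  then have t: "{v i, t} \<in> edges T" by (simp add: adj_rel_def)
  then obtain l where "l < q" "t = v l" "l \<noteq> i"
    using graph_doubleton_edge[OF quotient_tree(1) t] quotient_tree(3) by auto
  then show ?thesis using that t by blast
qed

lemma graph_G: "graph G"
  unfolding graph_def
proof (intro conjI ballI)
  have "finite (unit_verts v Fs i)" if "i < q" for i
    using finite_verts[OF copy_graph[OF that]] by (simp add: unit_verts_def)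
  then show "finite (verts G)" by (simp add: verts_G)
  fix e assume "e \<in> edges G"
  then consider "e \<in> edges T" | i where "i < q" "e \<in> unit_edges v Fs w i"
    using edges_G by blast
  then show "\<exists>a b. e = {a, b} \<and> a \<noteq> b \<and> a \<in> verts G \<and> b \<in> verts G"
  proof cases
    case 1
    then obtain i j where ij: "e = {v i, v j}" "i < q" "j < q" "i \<noteq> j" by (elim tree_edgeE)
    moreover have "v i \<noteq> v j" using ij inj_v by (auto simp: inj_on_eq_iff)
    ultimately show ?thesis using v_in_verts by blast
  next
    case (2 i)
    then obtain a b where "e = {a, b}" "a \<noteq> b" "a \<in> unit_verts v Fs i" "b \<in> unit_verts v Fs i"
      by (elim unit_edgeE)
    then show ?thesis using unit_subset_verts[OF \<open>i < q\<close>] by blast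
  qed
qed

lemma card_unit_edges:
  "i < q \<Longrightarrow> graph F \<Longrightarrow> card (unit_edges v Fs w i) = card (edges F) + 1"
  using hanging_edge_not_in_copy finite_edges[OF copy_graph] iso_card_edges[OF copy_iso copy_graph]
  by (simp add: unit_edges_def)

lemma card_edges_lower:
  assumes "graph F"
  shows "q * (card (edges F) + 2) \<le> card (edges G) + 1"
proof -
  let ?UE = "\<Union>i<q. unit_edges v Fs w i"
  have fin: "finite (unit_edges v Fs w i)" if "i < q" for i
    using finite_edges[OF copy_graph[OF that]] by (simp add: unit_edges_def)
  have "edges T \<inter> ?UE = {}"
  proof (rule ccontr)
    assume "edges T \<inter> ?UE \<noteq> {}"
    then obtain e i where e: "e \<in> edges T" "i < q" "e \<in> unit_edges v Fs w i" by blast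
    then obtain a b where ab: "e = {v a, v b}" "a < q" "b < q" "a \<noteq> b" by (elim tree_edgeE)
    then have "v a \<in> unit_verts v Fs i" "v b \<in> unit_verts v Fs i"
      using unit_edge_subset[OF e(2,3)] by auto
    then have "a = i" "b = i"
      using unit_of_vertex[OF ab(2) e(2) v_in_unit] unit_of_vertex[OF ab(3) e(2) v_in_unit] by simp_all
    then show False using ab(4) by simp
  qed
  moreover have "card ?UE = q * (card (edges F) + 1)"
  proof -
    have "unit_edges v Fs w i \<inter> unit_edges v Fs w j = {}" if ij: "i < q" "j < q" "i \<noteq> j" for i j
    proof (rule ccontr)
      assume "unit_edges v Fs w i \<inter> unit_edges v Fs w j \<noteq> {}"
      then obtain e where e: "e \<in> unit_edges v Fs w i" "e \<in> unit_edges v Fs w j" by blast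
      obtain a b where "e = {a, b}" using unit_edgeE[OF ij(1) e(1)] by metis
      then have "a \<in> unit_verts v Fs i" "a \<in> unit_verts v Fs j"
        using unit_edge_subset[OF ij(1) e(1)] unit_edge_subset[OF ij(2) e(2)] by auto
      then show False using unit_of_vertex ij by blast
    qed
    then have "card ?UE = (\<Sum>i<q. card (unit_edges v Fs w i))"
      using fin by (intro card_UN_disjoint) auto
    then show ?thesis using card_unit_edges assms by simp
  qed
  moreover have "q \<le> card (edges T) + 1"
    using connected_card_verts_le[OF quotient_tree(1)] quotient_tree(2,3) inj_v
    by (simp add: tree_def card_image)
  moreover have "card (edges G) = card (edges T) + card ?UE"
    using edges_G finite_edges[OF quotient_tree(1)] fin calculation(1)
    by (simp add: card_Un_disjoint)
  ultimately show ?thesis by (simp add: algebra_simps)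
qed

lemma special_if_size:
  assumes "m + 1 = q * (card (edges F) + 2)"
  shows "special m F G"
proof -
  let ?T' = "({v (q - 1)}, {}) :: 'a graph"
  have "v (q - 1) \<in> (\<Union>i<q. unit_verts v Fs i)"
    using v_in_unit q_pos by (intro UN_I[of "q - 1"]) auto
  then have meet: "verts ?T' \<inter> (\<Union>i<q. insert (v i) (verts (Fs i))) = {v (q - 1)}"
    and G': "G = (verts ?T' \<union> (\<Union>i<q. insert (v i) (verts (Fs i))),
             edges T \<union> edges ?T' \<union> (\<Union>i<q. insert {v i, w i} (edges (Fs i))))"
    using G_eq by (auto simp: unit_verts_def unit_edges_def)
  have T': "graph ?T'" "connected_graph ?T'" "card (edges ?T') = 0"
    using tree_singleton[of "v (q - 1)"] by (simp_all add: tree_def)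
  have copies: "\<forall>i<q. graph (Fs i) \<and> iso (Fs i) F \<and> w i \<in> verts (Fs i)"
    "\<forall>i<q. \<forall>j<q. i \<noteq> j \<longrightarrow> verts (Fs i) \<inter> verts (Fs j) = {}"
    "\<forall>i<q. \<forall>j<q. v j \<notin> verts (Fs i)"
    using copy_graph copy_iso w_in_copy copies_disjoint v_notin_copies by blast+
  have "special_constr m F G q 0"
    unfolding special_constr_def using q_pos assms inj_v copies quotient_tree T' meet G'
    by (intro conjI exI[of _ v] exI[of _ Fs] exI[of _ w] exI[of _ T] exI[of _ ?T']) simp_all
  then show ?thesis unfolding special_def by blast
qed

definition isolated_by :: "'a set \<Rightarrow> bool" where
  "isolated_by N \<longleftrightarrow> (\<forall>e\<in>edges T. e \<inter> N \<noteq> {}) \<and>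
     (\<forall>i<q. \<not> contains_copy (del_verts (unit_graph v Fs w i) N) F)"

lemma edge_in_unit_if_isolated_by:
  assumes "isolated_by N" "e \<in> edges G" "e \<inter> N = {}" "i < q" "a \<in> e" "a \<in> unit_verts v Fs i"
  shows "e \<in> unit_edges v Fs w i"
proof -
  have "e \<notin> edges T" using assms(1,3) unfolding isolated_by_def by blast
  then obtain j where j: "j < q" "e \<in> unit_edges v Fs w j" using assms(2) edges_G by blast
  then have "j = i" using unit_edge_subset[OF j] unit_of_vertex assms(4-6) by blast
  then show ?thesis using j by simp
qed

text \<open>As N meets every quotient tree edge and the gluing edge, a vertex of a unit has all its
  neighbours in \<open>\<Gamma> - N\<close> inside its own unit.\<close>

lemma local_unit_in_join:
  assumes G2: "graph G2" "verts G \<inter> verts G2 = {}"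
    and \<Gamma>: "\<Gamma> = (verts G \<union> verts G2, edges G \<union> edges G2 \<union> {{x, y}})"
    and N: "isolated_by N" "x \<in> N \<or> y \<in> N"
    and c: "c \<in> verts G - N"
  shows "\<exists>S. c \<in> S \<and> (\<forall>u. {c, u} \<in> edges (del_verts \<Gamma> N) \<longrightarrow> u \<in> S) \<and>
     \<not> contains_copy (verts (del_verts \<Gamma> N) \<inter> S, {e \<in> edges (del_verts \<Gamma> N). e \<subseteq> S}) F"
proof -
  obtain i where i: "i < q" "c \<in> unit_verts v Fs i" using c verts_G by auto
  let ?U = "unit_verts v Fs i"
  have in_unit: "e \<in> unit_edges v Fs w i \<and> e \<inter> N = {}"
    if e: "e \<in> edges (del_verts \<Gamma> N)" "a \<in> e" "a \<in> ?U" for e a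
  proof -
    have eN: "e \<inter> N = {}" and e\<Gamma>: "e \<in> edges \<Gamma>" using e(1) \<Gamma> by auto
    have "e \<noteq> {x, y}" using eN N(2) by auto
    moreover have "e \<notin> edges G2"
      using graph_edge_subset[OF G2(1)] e(2,3) unit_subset_verts[OF i(1)] G2(2) by blast
    ultimately have "e \<in> edges G" using e\<Gamma> \<Gamma> by auto
    then show ?thesis using edge_in_unit_if_isolated_by[OF N(1) _ eN i(1) e(2,3)] eN by blast
  qed
  have "\<not> contains_copy (verts (del_verts \<Gamma> N) \<inter> ?U, {e \<in> edges (del_verts \<Gamma> N). e \<subseteq> ?U}) F"
  proof
    assume copy: "contains_copy (verts (del_verts \<Gamma> N) \<inter> ?U, {e \<in> edges (del_verts \<Gamma> N). e \<subseteq> ?U}) F"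
    have "{e \<in> edges (del_verts \<Gamma> N). e \<subseteq> ?U} \<subseteq> edges (del_verts (unit_graph v Fs w i) N)"
    proof
      fix e assume e: "e \<in> {e \<in> edges (del_verts \<Gamma> N). e \<subseteq> ?U}"
      then have "e \<in> edges \<Gamma>" by simp
      then obtain a where "a \<in> e"
        using \<Gamma> graph_edge_nonempty[OF graph_G] graph_edge_nonempty[OF G2(1)] by fastforce
      then show "e \<in> edges (del_verts (unit_graph v Fs w i) N)"
        using in_unit[of e a] e unit_edges_del_verts[OF i(1)] by auto
    qed
    moreover have "verts (del_verts \<Gamma> N) \<inter> ?U \<subseteq> verts (del_verts (unit_graph v Fs w i) N)"
      by (auto simp: unit_graph_def)
    ultimately have "contains_copy (del_verts (unit_graph v Fs w i) N) F"
      using contains_copy_mono[OF copy] by simp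
    then show False using N(1) i(1) unfolding isolated_by_def by blast
  qed
  moreover have "u \<in> ?U" if "{c, u} \<in> edges (del_verts \<Gamma> N)" for u
    using in_unit[OF that _ i(2)] unit_edge_subset[OF i(1)] by blast
  ultimately show ?thesis using i(2) by blast
qed

end

lemma pure_decomposition_if_pure_special:
  assumes "pure_special m F G"
  obtains q v Fs w T where "pure_decomposition F G q v Fs w T" "m + 1 = q * (card (edges F) + 2)"
proof -
  obtain q v Fs w T T' where q: "1 \<le> q" "m + 1 = q * (card (edges F) + 2)"
    and decomp: "inj_on v {..<q}" "\<forall>i<q. graph (Fs i) \<and> iso (Fs i) F \<and> w i \<in> verts (Fs i)"
       "\<forall>i<q. \<forall>j<q. i \<noteq> j \<longrightarrow> verts (Fs i) \<inter> verts (Fs j) = {}"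
       "\<forall>i<q. \<forall>j<q. v j \<notin> verts (Fs i)" "graph T" "tree T" "verts T = v ` {..<q}"
    and T': "graph T'" "connected_graph T'" "card (edges T') = 0"
       "verts T' \<inter> (\<Union>i<q. insert (v i) (verts (Fs i))) = {v (q - 1)}"
    and G: "G = (verts T' \<union> (\<Union>i<q. insert (v i) (verts (Fs i))),
             edges T \<union> edges T' \<union> (\<Union>i<q. insert {v i, w i} (edges (Fs i))))"
    using assms unfolding pure_special_def special_constr_def by auto
  have "edges T' = {}" using T'(3) finite_edges[OF T'(1)] by simp
  moreover have "verts T' = {v (q - 1)}"
    using connected_without_edges[OF T'(2) calculation] T'(4) by blast
  moreover have "v (q - 1) \<in> (\<Union>i<q. insert (v i) (verts (Fs i)))" using q(1) by auto
  ultimately have "G = ((\<Union>i<q. unit_verts v Fs i), edges T \<union> (\<Union>i<q. unit_edges v Fs w i))"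
    using G by (auto simp: unit_verts_def unit_edges_def)
  then have "pure_decomposition F G q v Fs w T"
    using q(1) decomp by unfold_locales auto
  then show ?thesis using that q(2) by blast
qed

section \<open>Destroying the copies of F inside the units\<close>

locale pure_decomposition_dom = pure_decomposition +
  assumes graph_F: "graph F" and dom_one_F: "dom_one F" and two_edges_F: "2 \<le> card (edges F)"
begin

lemma card_copy_edges: "i < q \<Longrightarrow> card (edges (Fs i)) = card (edges F)"
  using iso_card_edges[OF copy_iso copy_graph graph_F] .

lemma copy_dom_one: "i < q \<Longrightarrow> dom_one (Fs i)"
  using dom_one_iso[OF copy_iso dom_one_F] .

lemma copy_edge_at:
  assumes "i < q" "a \<in> verts (Fs i)"
  obtains b where "{a, b} \<in> edges (Fs i)"
proof -
  have "edges (Fs i) \<noteq> {}" using card_copy_edges[OF assms(1)] two_edges_F by auto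
  then show ?thesis
    using dom_one_edge_at[OF copy_graph[OF assms(1)] copy_dom_one[OF assms(1)] _ assms(2)] that
    by blast
qed

text \<open>A unit has exactly one edge more than F, so losing two edges destroys every copy.\<close>

lemma unit_F_free_if_two_edges_hit:
  assumes i: "i < q" and e: "e1 \<in> unit_edges v Fs w i" "e2 \<in> unit_edges v Fs w i" "e1 \<noteq> e2"
    and hit: "e1 \<inter> N \<noteq> {}" "e2 \<inter> N \<noteq> {}"
  shows "\<not> contains_copy (del_verts (unit_graph v Fs w i) N) F"
proof
  let ?E = "edges (del_verts (unit_graph v Fs w i) N)"
  assume "contains_copy (del_verts (unit_graph v Fs w i) N) F"
  have fin: "finite (unit_edges v Fs w i)"
    using finite_edges[OF copy_graph[OF i]] by (simp add: unit_edges_def)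
  have sub: "?E \<subseteq> unit_edges v Fs w i - {e1, e2}"
    using hit unit_edges_del_verts[OF i] by auto
  then have "card (edges F) \<le> card (unit_edges v Fs w i - {e1, e2})"
    using card_edges_le_if_contains_copy[OF \<open>contains_copy _ F\<close> graph_F] fin
    by (meson card_mono finite_Diff finite_subset le_trans)
  also have "\<dots> = card (edges F) - 1"
    using card_unit_edges[OF i graph_F] e fin by (simp add: card_Diff_subset)
  finally show False using two_edges_F by simp
qed

lemma unit_F_free_if_hanging_end:
  assumes "i < q" "w i \<in> N"
  shows "\<not> contains_copy (del_verts (unit_graph v Fs w i) N) F"
proof -
  obtain b where b: "{w i, b} \<in> edges (Fs i)" using copy_edge_at[OF assms(1) w_in_copy[OF assms(1)]] .
  have "{w i, b} \<noteq> {v i, w i}" using b hanging_edge_not_in_copy[OF assms(1)] by auto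
  then show ?thesis
    using unit_F_free_if_two_edges_hit[OF assms(1), of "{v i, w i}" "{w i, b}"] b assms(2)
    by (auto simp: unit_edges_def)
qed

lemma unit_F_free_if_root_and_vertex:
  assumes "i < q" "a \<in> verts (Fs i)" "a \<in> N" "v i \<in> N"
  shows "\<not> contains_copy (del_verts (unit_graph v Fs w i) N) F"
proof -
  obtain b where b: "{a, b} \<in> edges (Fs i)" using copy_edge_at[OF assms(1,2)] .
  have "{a, b} \<noteq> {v i, w i}" using b hanging_edge_not_in_copy[OF assms(1)] by auto
  then show ?thesis
    using unit_F_free_if_two_edges_hit[OF assms(1), of "{v i, w i}" "{a, b}"] b assms(3,4)
    by (auto simp: unit_edges_def)
qed

lemma unit_F_free_if_closed_nbhd:
  assumes "i < q" "a \<in> verts (Fs i)" "a \<in> N" and nbhd: "\<And>b. {a, b} \<in> edges (Fs i) \<Longrightarrow> b \<in> N"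
  shows "\<not> contains_copy (del_verts (unit_graph v Fs w i) N) F"
proof -
  obtain b where b: "{a, b} \<in> edges (Fs i)" using copy_edge_at[OF assms(1,2)] .
  obtain e where e: "e \<in> edges (Fs i)" "e \<noteq> {a, b}" "a \<in> e \<or> b \<in> e"
    using dom_one_other_edge[OF copy_graph[OF assms(1)] copy_dom_one[OF assms(1)] _ b]
      card_copy_edges[OF assms(1)] two_edges_F by auto
  have "e \<inter> N \<noteq> {}" using e(3) assms(3) nbhd[OF b] by blast
  then show ?thesis
    using unit_F_free_if_two_edges_hit[OF assms(1), of "{a, b}" e] b e(1,2) assms(3)
    by (auto simp: unit_edges_def)
qed

lemma isolated_by_if_roots_except:
  assumes i: "i < q" and roots: "\<And>l. l < q \<Longrightarrow> l \<noteq> i \<Longrightarrow> v l \<in> N \<and> w l \<in> N"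
    and unit_i: "\<not> contains_copy (del_verts (unit_graph v Fs w i) N) F"
  shows "isolated_by N"
  unfolding isolated_by_def
proof (intro conjI ballI allI impI)
  fix e assume "e \<in> edges T"
  then obtain a b where "e = {v a, v b}" "a < q" "b < q" "a \<noteq> b" by (elim tree_edgeE)
  then show "e \<inter> N \<noteq> {}" using roots by (cases "a = i") auto
next
  fix l assume "l < q"
  then show "\<not> contains_copy (del_verts (unit_graph v Fs w l) N) F"
    using roots unit_i unit_F_free_if_hanging_end by (cases "l = i") auto
qed

lemma isolated_by_if_roots:
  assumes "\<And>l. l < q \<Longrightarrow> v l \<in> N \<and> w l \<in> N"
  shows "isolated_by N"
proof -
  have "0 < q" using q_pos by simp
  then show ?thesis using assms by (intro isolated_by_if_roots_except[of 0] unit_F_free_if_hanging_end) auto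
qed

lemma root_closed_nbhd:
  assumes H: "verts G \<subseteq> verts H" "edges G \<subseteq> edges H" and l: "l < q" "v l \<in> D"
  shows "v l \<in> closed_nbhd H D \<and> w l \<in> closed_nbhd H D"
proof -
  have "{v l, w l} \<in> unit_edges v Fs w l" by (simp add: unit_edges_def)
  then have "{v l, w l} \<in> edges H" using unit_edges_subset_edges[OF l(1)] H(2) by blast
  moreover have "w l \<in> verts H" using w_in_unit[OF l(1)] unit_subset_verts[OF l(1)] H(1) by blast
  ultimately have "w l \<in> closed_nbhd H D" by (rule closed_nbhd_neighbour[OF l(2)])
  moreover have "v l \<in> closed_nbhd H D" using l(2) by (simp add: closed_nbhd_def)
  ultimately show ?thesis by blast
qed

lemma isolated_by_closed_nbhd_if_roots:
  assumes "verts G \<subseteq> verts H" "edges G \<subseteq> edges H" "v ` {..<q} \<subseteq> D"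
  shows "isolated_by (closed_nbhd H D)"
proof (rule isolated_by_if_roots)
  fix l assume l: "l < q"
  then have "v l \<in> D" using assms(3) by auto
  then show "v l \<in> closed_nbhd H D \<and> w l \<in> closed_nbhd H D" by (rule root_closed_nbhd[OF assms(1,2) l])
qed

lemma isolated_by_closed_nbhd_if_unit_vertex:
  assumes H: "verts G \<subseteq> verts H" "edges G \<subseteq> edges H"
    and i: "i < q" "a \<in> unit_verts v Fs i" and D: "insert a (v ` ({..<q} - {i})) \<subseteq> D"
  shows "isolated_by (closed_nbhd H D)"
proof (cases "a = v i")
  case True
  then have "v ` {..<q} \<subseteq> D" using D by blast
  then show ?thesis by (rule isolated_by_closed_nbhd_if_roots[OF H])
next
  case False
  then have a: "a \<in> verts (Fs i)" "a \<in> D" using i(2) D by (auto simp: unit_verts_def)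
  show ?thesis
  proof (rule isolated_by_if_roots_except[OF i(1)])
    show "v l \<in> closed_nbhd H D \<and> w l \<in> closed_nbhd H D" if "l < q" "l \<noteq> i" for l
    proof -
      have "v l \<in> D" using D that by auto
      then show ?thesis by (rule root_closed_nbhd[OF H that(1)])
    qed
    have nbhd: "b \<in> closed_nbhd H D" if "{a, b} \<in> edges (Fs i)" for b
    proof (rule closed_nbhd_neighbour[OF a(2)])
      have "{a, b} \<in> unit_edges v Fs w i" using that by (simp add: unit_edges_def)
      then show "{a, b} \<in> edges H" using unit_edges_subset_edges[OF i(1)] H(2) by blast
      show "b \<in> verts H"
        using graph_doubleton_edge[OF copy_graph[OF i(1)] that] unit_subset_verts[OF i(1)] H(1)
        by (auto simp: unit_verts_def)
    qed
    show "\<not> contains_copy (del_verts (unit_graph v Fs w i) (closed_nbhd H D)) F"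
      using unit_F_free_if_closed_nbhd[OF i(1) a(1) subsetD[OF closed_nbhd_subset a(2)] nbhd] .
  qed
qed

lemma isolated_by_closed_nbhd_if_inner_dominated:
  assumes H: "verts G \<subseteq> verts H" "edges G \<subseteq> edges H"
    and i: "i < q" "a \<in> verts (Fs i)" "a \<in> closed_nbhd H D" and D: "v ` ({..<q} - {i}) \<subseteq> D"
    and inner: "2 \<le> q \<or> \<not> contains_copy (del_verts (unit_graph v Fs w 0) {a}) F"
  shows "isolated_by (closed_nbhd H D)"
proof (rule isolated_by_if_roots_except[OF i(1)])
  show "v l \<in> closed_nbhd H D \<and> w l \<in> closed_nbhd H D" if "l < q" "l \<noteq> i" for l
  proof -
    have "v l \<in> D" using D that by auto
    then show ?thesis by (rule root_closed_nbhd[OF H that(1)])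
  qed
  show "\<not> contains_copy (del_verts (unit_graph v Fs w i) (closed_nbhd H D)) F"
  proof (cases "2 \<le> q")
    case True
    then obtain l where l: "l < q" "l \<noteq> i" "{v i, v l} \<in> edges T" using tree_neighbour i(1) by blast
    have "{v l, v i} \<in> edges H" using l(3) edges_G H(2) by (auto simp: insert_commute)
    moreover have "v i \<in> verts H" using v_in_verts[OF i(1)] H(1) by blast
    moreover have "v l \<in> D" using D l(1,2) by auto
    ultimately have "v i \<in> closed_nbhd H D" using closed_nbhd_neighbour by metis
    then show ?thesis using unit_F_free_if_root_and_vertex[OF i] by blast
  next
    case False
    then have "i = 0" "\<not> contains_copy (del_verts (unit_graph v Fs w 0) {a}) F"
      using i(1) inner by auto
    then show ?thesis
      using contains_copy_del_verts_antimono[of "unit_graph v Fs w 0" "closed_nbhd H D" F "{a}"] i(3)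
      by auto
  qed
qed

lemma graph_unit_del_verts: "i < q \<Longrightarrow> graph (del_verts (unit_graph v Fs w i) N)"
  unfolding graph_def
proof (intro conjI ballI)
  assume i: "i < q"
  show "finite (verts (del_verts (unit_graph v Fs w i) N))"
    using finite_verts[OF copy_graph[OF i]] by (simp add: unit_graph_def unit_verts_def)
  fix e assume "e \<in> edges (del_verts (unit_graph v Fs w i) N)"
  then have e: "e \<in> unit_edges v Fs w i" "e \<inter> N = {}" using unit_edges_del_verts[OF i] by auto
  then obtain a b where "e = {a, b}" "a \<noteq> b" "a \<in> unit_verts v Fs i" "b \<in> unit_verts v Fs i"
    using unit_edgeE[OF i] by metis
  then show "\<exists>a b. e = {a, b} \<and> a \<noteq> b \<and> a \<in> verts (del_verts (unit_graph v Fs w i) N) \<and>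
      b \<in> verts (del_verts (unit_graph v Fs w i) N)"
    using e(2) by (auto simp: unit_graph_def)
qed

text \<open>Deleting a vertex a of the copy of F leaves a unit with as many vertices as F and at most
  as many edges, so a copy of F in it is all of it, and a lies on just one edge of the unit.\<close>

lemma iso_unit_del_vertex:
  assumes i: "i < q" and a: "a \<in> verts (Fs i)"
    and copy: "contains_copy (del_verts (unit_graph v Fs w i) {a}) F"
  shows "iso (del_verts (unit_graph v Fs w i) {a}) F"
proof (rule iso_if_contains_copy[OF copy graph_unit_del_verts[OF i] graph_F])
  let ?L = "del_verts (unit_graph v Fs w i) {a}" and ?U = "unit_verts v Fs i"
  have "card ?U = card (verts (Fs i)) + 1"
    using v_notin_copies[OF i i] finite_verts[OF copy_graph[OF i]] by (simp add: unit_verts_def)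
  moreover have "verts ?L = ?U - {a}" "a \<in> ?U" using a by (auto simp: unit_graph_def unit_verts_def)
  ultimately show "card (verts ?L) = card (verts F)"
    using iso_card_verts[OF copy_iso[OF i]] finite_verts[OF copy_graph[OF i]]
    by (simp add: unit_verts_def)
  obtain b where b: "{a, b} \<in> edges (Fs i)" using copy_edge_at[OF i a] .
  have fin: "finite (unit_edges v Fs w i)" using finite_edges[OF copy_graph[OF i]] by (simp add: unit_edges_def)
  have "edges ?L \<subseteq> unit_edges v Fs w i - {{a, b}}" "{a, b} \<in> unit_edges v Fs w i"
    using b unit_edges_del_verts[OF i] by (auto simp: unit_edges_def)
  then have "card (edges ?L) \<le> card (unit_edges v Fs w i) - 1"
    using fin by (metis card_Diff_singleton card_mono finite_Diff)
  then show "card (edges ?L) \<le> card (edges F)" using card_unit_edges[OF i graph_F] by simp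
qed

lemma unique_unit_edge_at:
  assumes i: "i < q" and a: "a \<in> verts (Fs i)"
    and copy: "contains_copy (del_verts (unit_graph v Fs w i) {a}) F"
  obtains b where "{e \<in> unit_edges v Fs w i. a \<in> e} = {{a, b}}" "a \<noteq> b" "b \<in> unit_verts v Fs i"
proof -
  let ?E = "unit_edges v Fs w i" and ?L = "del_verts (unit_graph v Fs w i) {a}"
  have eL: "edges ?L = {e \<in> ?E. a \<notin> e}" using unit_edges_del_verts[OF i] by auto
  have "card {e \<in> ?E. a \<in> e} = 1"
  proof -
    have "?E = edges ?L \<union> {e \<in> ?E. a \<in> e}" "edges ?L \<inter> {e \<in> ?E. a \<in> e} = {}" using eL by auto
    moreover have "finite ?E" using finite_edges[OF copy_graph[OF i]] by (simp add: unit_edges_def)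
    ultimately have "card ?E = card (edges ?L) + card {e \<in> ?E. a \<in> e}"
      by (metis card_Un_disjoint finite_Un)
    then show ?thesis
      using iso_card_edges[OF iso_unit_del_vertex[OF i a copy] graph_unit_del_verts[OF i] graph_F]
        card_unit_edges[OF i graph_F] by simp
  qed
  then obtain e where e: "{e' \<in> ?E. a \<in> e'} = {e}" by (rule card_1_singletonE)
  then have ae: "e \<in> ?E" "a \<in> e" by auto
  then obtain c d where cd: "e = {c, d}" "c \<noteq> d" "c \<in> unit_verts v Fs i" "d \<in> unit_verts v Fs i"
    using unit_edgeE[OF i] by metis
  define b where "b = (if c = a then d else c)"
  have "e = {a, b}" "a \<noteq> b" "b \<in> unit_verts v Fs i" using cd ae(2) by (auto simp: b_def)
  then show ?thesis using that e by blast
qed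

lemma redecompose_at:
  assumes q: "q = 1" and a: "a \<in> verts (Fs 0)"
    and copy: "contains_copy (del_verts (unit_graph v Fs w 0) {a}) F"
  shows "\<exists>v' Fs' w' T'. pure_decomposition F G q v' Fs' w' T' \<and> v' 0 = a"
proof -
  have q0: "0 < q" using q by simp
  define L where "L = del_verts (unit_graph v Fs w 0) {a}"
  obtain b where b: "{e \<in> unit_edges v Fs w 0. a \<in> e} = {{a, b}}" "a \<noteq> b" "b \<in> unit_verts v Fs 0"
    using unique_unit_edge_at[OF q0 a copy] .
  have vL: "verts L = unit_verts v Fs 0 - {a}" by (simp add: L_def unit_graph_def)
  have "edges L = {e \<in> unit_edges v Fs w 0. a \<notin> e}"
    using unit_edges_del_verts[OF q0] by (auto simp: L_def)
  moreover have "unit_edges v Fs w 0 =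
      {e \<in> unit_edges v Fs w 0. a \<in> e} \<union> {e \<in> unit_edges v Fs w 0. a \<notin> e}" by blast
  ultimately have "unit_edges v Fs w 0 = insert {a, b} (edges L)" using b(1) by simp
  moreover have "edges T = {}" using q by (auto elim: tree_edgeE)
  moreover have "a \<in> unit_verts v Fs 0" using a by (simp add: unit_verts_def)
  ultimately have G: "G = ((\<Union>i<q. unit_verts (\<lambda>_. a) (\<lambda>_. L) i),
      edges ({a}, {}) \<union> (\<Union>i<q. unit_edges (\<lambda>_. a) (\<lambda>_. L) (\<lambda>_. b) i))"
    using G_eq q vL by (auto simp: unit_verts_def unit_edges_def)
  have "pure_decomposition F G q (\<lambda>_. a) (\<lambda>_. L) (\<lambda>_. b) ({a}, {})"
  proof unfold_locales
    show "1 \<le> q" "inj_on (\<lambda>_. a) {..<q}" "verts ({a}, {}) = (\<lambda>_. a) ` {..<q}"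
      using q by (simp_all add: lessThan_Suc)
    show "graph ({a}, {})" "tree ({a}, {})" using tree_singleton[of a] by simp_all
    show "graph L" "iso L F" unfolding L_def
      using graph_unit_del_verts[OF q0] iso_unit_del_vertex[OF q0 a copy] by simp_all
    show "b \<in> verts L" "a \<notin> verts L" using b vL by simp_all
    show "verts L \<inter> verts L = {}" if "i < q" "j < q" "i \<noteq> j" for i j using that q by simp
  qed (rule G)
  then show ?thesis by blast
qed

lemma root_or_inner:
  assumes "a \<in> verts G"
  shows "(\<exists>v' Fs' w' T' i. pure_decomposition F G q v' Fs' w' T' \<and> i < q \<and> a = v' i) \<or>
    (\<exists>i<q. a \<in> verts (Fs i) \<and> (2 \<le> q \<or> \<not> contains_copy (del_verts (unit_graph v Fs w 0) {a}) F))"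
proof -
  obtain i where i: "i < q" "a \<in> unit_verts v Fs i" using assms verts_G by auto
  consider "a = v i" | "a \<in> verts (Fs i)" "2 \<le> q \<or> \<not> contains_copy (del_verts (unit_graph v Fs w 0) {a}) F"
    | "a \<in> verts (Fs i)" "q = 1" "contains_copy (del_verts (unit_graph v Fs w 0) {a}) F"
    using i q_pos by (fastforce simp: unit_verts_def)
  then show ?thesis
  proof cases
    case 1
    then show ?thesis using pure_decomposition_axioms i(1) by blast
  next
    case 2
    then show ?thesis using i(1) by blast
  next
    case 3
    then have "i = 0" using i(1) by simp
    then show ?thesis using redecompose_at 3 i(1) by (metis gr0I)
  qed
qed

end

section \<open>Joining two pure special graphs by an edge\<close>

lemma lessThan_add_split: "{..<a + b} = {..<a} \<union> (+) a ` {..<b}" for a b :: nat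
proof -
  have "(+) a ` {..<b} = {a..<a + b}" by (simp add: lessThan_atLeast0 add.commute)
  then show ?thesis using ivl_disj_un_one(2)[of a "a + b"] by simp
qed

lemma UN_lessThan_add: "(\<Union>l<a + b. f l) = (\<Union>l<a. f l) \<union> (\<Union>l<b. f (a + l))" for a b :: nat
  by (simp add: lessThan_add_split image_image)

locale pure_join =
  P1: pure_decomposition_dom F \<Gamma>1 q1 v1 Fs1 w1 T1 + P2: pure_decomposition_dom F \<Gamma>2 q2 v2 Fs2 w2 T2
  for F :: "'b graph" and \<Gamma>1 :: "'a graph" and q1 v1 Fs1 w1 T1 and \<Gamma>2 :: "'a graph" and q2 v2 Fs2 w2 T2 +
  fixes x y :: 'a and \<Gamma> :: "'a graph"
  assumes disjoint: "verts \<Gamma>1 \<inter> verts \<Gamma>2 = {}"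
    and x_in: "x \<in> verts \<Gamma>1" and y_in: "y \<in> verts \<Gamma>2"
    and \<Gamma>_eq: "\<Gamma> = (verts \<Gamma>1 \<union> verts \<Gamma>2, edges \<Gamma>1 \<union> edges \<Gamma>2 \<union> {{x, y}})"
begin

lemma verts_\<Gamma>: "verts \<Gamma> = verts \<Gamma>1 \<union> verts \<Gamma>2"
  using \<Gamma>_eq by simp

lemma edges_\<Gamma>: "edges \<Gamma> = edges \<Gamma>1 \<union> edges \<Gamma>2 \<union> {{x, y}}"
  using \<Gamma>_eq by simp

lemma subgraph_\<Gamma>: "verts \<Gamma>1 \<subseteq> verts \<Gamma>" "edges \<Gamma>1 \<subseteq> edges \<Gamma>" "verts \<Gamma>2 \<subseteq> verts \<Gamma>" "edges \<Gamma>2 \<subseteq> edges \<Gamma>"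
  using verts_\<Gamma> edges_\<Gamma> by auto

lemma swap: "pure_join F \<Gamma>2 q2 v2 Fs2 w2 T2 \<Gamma>1 q1 v1 Fs1 w1 T1 y x \<Gamma>"
proof -
  have "\<Gamma> = (verts \<Gamma>2 \<union> verts \<Gamma>1, edges \<Gamma>2 \<union> edges \<Gamma>1 \<union> {{y, x}})"
    using \<Gamma>_eq by (simp add: Un_commute insert_commute)
  then show ?thesis
    using disjoint x_in y_in P1.pure_decomposition_dom_axioms P2.pure_decomposition_dom_axioms
    by (simp add: pure_join_def pure_join_axioms_def Int_commute)
qed

lemma with_decompositions:
  assumes "pure_decomposition F \<Gamma>1 q1 v1' Fs1' w1' T1'" "pure_decomposition F \<Gamma>2 q2 v2' Fs2' w2' T2'"
  shows "pure_join F \<Gamma>1 q1 v1' Fs1' w1' T1' \<Gamma>2 q2 v2' Fs2' w2' T2' x y \<Gamma>"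
  unfolding pure_join_def pure_join_axioms_def pure_decomposition_dom_def pure_decomposition_dom_axioms_def
  using assms disjoint x_in y_in \<Gamma>_eq P1.graph_F P1.dom_one_F P1.two_edges_F by simp

lemma card_edges_\<Gamma>: "card (edges \<Gamma>) = card (edges \<Gamma>1) + card (edges \<Gamma>2) + 1"
proof -
  have fin: "finite (edges \<Gamma>1)" "finite (edges \<Gamma>2)"
    using finite_edges[OF P1.graph_G] finite_edges[OF P2.graph_G] .
  have "edges \<Gamma>1 \<inter> edges \<Gamma>2 = {}"
    using graph_edge_subset[OF P1.graph_G] graph_edge_subset[OF P2.graph_G]
      graph_edge_nonempty[OF P1.graph_G] disjoint by blast
  moreover have "{x, y} \<notin> edges \<Gamma>1 \<union> edges \<Gamma>2"
    using graph_edge_subset[OF P1.graph_G] graph_edge_subset[OF P2.graph_G] x_in y_in disjoint by blast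
  ultimately show ?thesis using fin by (simp add: edges_\<Gamma> card_Un_disjoint)
qed

lemma card_edges_lower: "(q1 + q2) * (card (edges F) + 2) \<le> card (edges \<Gamma>) + 1"
  using P1.card_edges_lower[OF P1.graph_F] P2.card_edges_lower[OF P1.graph_F] card_edges_\<Gamma>
  by (simp add: algebra_simps)

lemma isolating_if_isolated_by:
  assumes D: "D \<subseteq> verts \<Gamma>"
    and iso: "P1.isolated_by (closed_nbhd \<Gamma> D)" "P2.isolated_by (closed_nbhd \<Gamma> D)"
    and xy: "x \<in> closed_nbhd \<Gamma> D \<or> y \<in> closed_nbhd \<Gamma> D"
  shows "isolating \<Gamma> F D"
  unfolding isolating_def
proof (intro conjI D not_contains_copy_if_local[OF P1.graph_F P1.dom_one_F])
  let ?N = "closed_nbhd \<Gamma> D"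
  fix c assume c: "c \<in> verts (del_verts \<Gamma> ?N)"
  then consider "c \<in> verts \<Gamma>1 - ?N" | "c \<in> verts \<Gamma>2 - ?N" using verts_\<Gamma> by auto
  then show "\<exists>S. c \<in> S \<and> (\<forall>u. {c, u} \<in> edges (del_verts \<Gamma> ?N) \<longrightarrow> u \<in> S) \<and>
      \<not> contains_copy (verts (del_verts \<Gamma> ?N) \<inter> S, {e \<in> edges (del_verts \<Gamma> ?N). e \<subseteq> S}) F"
  proof cases
    case 1
    then show ?thesis
      using P1.local_unit_in_join[OF P2.graph_G disjoint \<Gamma>_eq iso(1) xy] by blast
  next
    case 2
    have "\<Gamma> = (verts \<Gamma>2 \<union> verts \<Gamma>1, edges \<Gamma>2 \<union> edges \<Gamma>1 \<union> {{y, x}})"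
      using \<Gamma>_eq by (simp add: Un_commute insert_commute)
    moreover have "verts \<Gamma>2 \<inter> verts \<Gamma>1 = {}" using disjoint by blast
    ultimately show ?thesis
      using P2.local_unit_in_join[OF P1.graph_G _ _ iso(2)] xy 2 by blast
  qed
qed

lemma iota_le_if_root:
  assumes "i < q1" "x = v1 i"
  shows "iota \<Gamma> F \<le> q1 + q2"
proof -
  let ?D = "v1 ` {..<q1} \<union> v2 ` {..<q2}"
  have sub: "v1 ` {..<q1} \<subseteq> verts \<Gamma>1" "v2 ` {..<q2} \<subseteq> verts \<Gamma>2"
    using P1.image_v_subset P2.image_v_subset by blast+
  then have "card ?D = q1 + q2"
    using disjoint P1.card_image_v[of "{..<q1}"] P2.card_image_v[of "{..<q2}"]
    by (subst card_Un_disjoint) auto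
  moreover have "isolating \<Gamma> F ?D"
  proof (rule isolating_if_isolated_by)
    show "?D \<subseteq> verts \<Gamma>" using sub verts_\<Gamma> by blast
    show "P1.isolated_by (closed_nbhd \<Gamma> ?D)"
      by (rule P1.isolated_by_closed_nbhd_if_roots[OF subgraph_\<Gamma>(1,2)]) blast
    show "P2.isolated_by (closed_nbhd \<Gamma> ?D)"
      by (rule P2.isolated_by_closed_nbhd_if_roots[OF subgraph_\<Gamma>(3,4)]) blast
    have "x \<in> ?D" using assms by blast
    then show "x \<in> closed_nbhd \<Gamma> ?D \<or> y \<in> closed_nbhd \<Gamma> ?D" using closed_nbhd_subset[of ?D \<Gamma>] by blast
  qed
  ultimately show ?thesis using iota_le by metis
qed

text \<open>The isolating set consists of y and the roots of all units except those of x and y;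
  y dominates x.\<close>

lemma iota_less_if_inner:
  assumes i: "i < q1" "x \<in> verts (Fs1 i)"
    and inner: "2 \<le> q1 \<or> \<not> contains_copy (del_verts (unit_graph v1 Fs1 w1 0) {x}) F"
  shows "iota \<Gamma> F < q1 + q2"
proof -
  obtain j where j: "j < q2" "y \<in> unit_verts v2 Fs2 j" using y_in P2.verts_G by auto
  let ?D1 = "v1 ` ({..<q1} - {i})" and ?D2 = "insert y (v2 ` ({..<q2} - {j}))"
  have sub: "?D1 \<subseteq> verts \<Gamma>1" "?D2 \<subseteq> verts \<Gamma>2"
    using P1.image_v_subset[of "{..<q1} - {i}"] P2.image_v_subset[of "{..<q2} - {j}"] y_in by auto
  have "card ?D1 = q1 - 1" using P1.card_image_v[of "{..<q1} - {i}"] i(1) by simp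
  then have "card (?D1 \<union> ?D2) < q1 + q2"
    using sub disjoint P1.q_pos P2.card_insert_roots_except[OF j] by (subst card_Un_disjoint) auto
  moreover have "isolating \<Gamma> F (?D1 \<union> ?D2)"
  proof (rule isolating_if_isolated_by)
    show "?D1 \<union> ?D2 \<subseteq> verts \<Gamma>" using sub verts_\<Gamma> by blast
    have "{y, x} \<in> edges \<Gamma>" using edges_\<Gamma> by (auto simp: insert_commute)
    moreover have "x \<in> verts \<Gamma>" using x_in verts_\<Gamma> by blast
    ultimately have x: "x \<in> closed_nbhd \<Gamma> (?D1 \<union> ?D2)"
      by (rule closed_nbhd_neighbour[OF UnI2[OF insertI1]])
    then show "x \<in> closed_nbhd \<Gamma> (?D1 \<union> ?D2) \<or> y \<in> closed_nbhd \<Gamma> (?D1 \<union> ?D2)" by blast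
    show "P1.isolated_by (closed_nbhd \<Gamma> (?D1 \<union> ?D2))"
      by (rule P1.isolated_by_closed_nbhd_if_inner_dominated[OF subgraph_\<Gamma>(1,2) i x _ inner]) blast
    show "P2.isolated_by (closed_nbhd \<Gamma> (?D1 \<union> ?D2))"
      by (rule P2.isolated_by_closed_nbhd_if_unit_vertex[OF subgraph_\<Gamma>(3,4) j]) blast
  qed
  ultimately show ?thesis using iota_le by (metis le_less_trans)
qed

lemma roots_if_iota_large:
  assumes large: "q1 + q2 \<le> iota \<Gamma> F"
  obtains v1' Fs1' w1' T1' i v2' Fs2' w2' T2' j
  where "pure_join F \<Gamma>1 q1 v1' Fs1' w1' T1' \<Gamma>2 q2 v2' Fs2' w2' T2' x y \<Gamma>"
    and "i < q1" "x = v1' i" "j < q2" "y = v2' j"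
proof -
  interpret swapped: pure_join F \<Gamma>2 q2 v2 Fs2 w2 T2 \<Gamma>1 q1 v1 Fs1 w1 T1 y x \<Gamma> by (rule swap)
  have "\<not> (\<exists>i<q1. x \<in> verts (Fs1 i) \<and>
      (2 \<le> q1 \<or> \<not> contains_copy (del_verts (unit_graph v1 Fs1 w1 0) {x}) F))"
    using iota_less_if_inner large by (meson not_less)
  then obtain v1' Fs1' w1' T1' i where P1': "pure_decomposition F \<Gamma>1 q1 v1' Fs1' w1' T1'" "i < q1" "x = v1' i"
    using P1.root_or_inner[OF x_in] by blast
  have "\<not> (\<exists>j<q2. y \<in> verts (Fs2 j) \<and>
      (2 \<le> q2 \<or> \<not> contains_copy (del_verts (unit_graph v2 Fs2 w2 0) {y}) F))"
    using swapped.iota_less_if_inner large by (metis add.commute not_less)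
  then obtain v2' Fs2' w2' T2' j where P2': "pure_decomposition F \<Gamma>2 q2 v2' Fs2' w2' T2'" "j < q2" "y = v2' j"
    using P2.root_or_inner[OF y_in] by blast
  show ?thesis using that with_decompositions[OF P1'(1) P2'(1)] P1'(2,3) P2'(2,3) by blast
qed

definition joined_v :: "nat \<Rightarrow> 'a" where
  "joined_v l = (if l < q1 then v1 l else v2 (l - q1))"

definition joined_copies :: "nat \<Rightarrow> 'a graph" where
  "joined_copies l = (if l < q1 then Fs1 l else Fs2 (l - q1))"

definition joined_w :: "nat \<Rightarrow> 'a" where
  "joined_w l = (if l < q1 then w1 l else w2 (l - q1))"

lemma unit_verts_joined:
  "unit_verts joined_v joined_copies l = (if l < q1 then unit_verts v1 Fs1 l else unit_verts v2 Fs2 (l - q1))"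
  by (simp add: joined_v_def joined_copies_def unit_verts_def)

lemma unit_edges_joined: "unit_edges joined_v joined_copies joined_w l =
    (if l < q1 then unit_edges v1 Fs1 w1 l else unit_edges v2 Fs2 w2 (l - q1))"
  by (simp add: joined_v_def joined_copies_def joined_w_def unit_edges_def)

lemma joined_units_disjoint:
  assumes "a < q1 + q2" "b < q1 + q2" "a \<noteq> b"
  shows "unit_verts joined_v joined_copies a \<inter> unit_verts joined_v joined_copies b = {}"
proof -
  consider "a < q1" "b < q1" | "\<not> a < q1" "\<not> b < q1" | "a < q1 \<longleftrightarrow> \<not> b < q1" by blast
  then show ?thesis
  proof cases
    case 1
    then show ?thesis using P1.units_disjoint assms(3) by (simp add: unit_verts_joined)
  next
    case 2
    then have "a - q1 < q2" "b - q1 < q2" "a - q1 \<noteq> b - q1" using assms by auto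
    then show ?thesis using P2.units_disjoint 2 by (simp add: unit_verts_joined)
  next
    case 3
    have "unit_verts joined_v joined_copies l \<subseteq> (if l < q1 then verts \<Gamma>1 else verts \<Gamma>2)"
      if "l < q1 + q2" for l
      using P1.unit_subset_verts P2.unit_subset_verts that by (simp add: unit_verts_joined)
    from this[OF assms(1)] this[OF assms(2)] 3 show ?thesis using disjoint by (cases "a < q1") auto
  qed
qed

lemma image_joined_v: "joined_v ` {..<q1 + q2} = v1 ` {..<q1} \<union> v2 ` {..<q2}"
proof -
  have "joined_v ` {..<q1} = v1 ` {..<q1}" by (rule image_cong) (simp_all add: joined_v_def)
  moreover have "joined_v ` (+) q1 ` {..<q2} = v2 ` {..<q2}"
    unfolding image_image by (rule image_cong) (simp_all add: joined_v_def)
  ultimately show ?thesis by (simp add: lessThan_add_split image_Un)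
qed

lemma joined_tree:
  assumes "i < q1" "x = v1 i" "j < q2" "y = v2 j"
  shows "graph (verts T1 \<union> verts T2, edges T1 \<union> edges T2 \<union> {{x, y}}) \<and>
    tree (verts T1 \<union> verts T2, edges T1 \<union> edges T2 \<union> {{x, y}})"
proof (rule tree_join[OF P1.quotient_tree(1,2) P2.quotient_tree(1,2)])
  have "verts T1 \<subseteq> verts \<Gamma>1" "verts T2 \<subseteq> verts \<Gamma>2"
    using P1.quotient_tree(3) P2.quotient_tree(3) P1.image_v_subset[of "{..<q1}"]
      P2.image_v_subset[of "{..<q2}"] by simp_all
  then show "verts T1 \<inter> verts T2 = {}" using disjoint by blast
  show "x \<in> verts T1" "y \<in> verts T2" using P1.quotient_tree(3) P2.quotient_tree(3) assms by simp_all
qed simp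

lemma join_decomposition:
  assumes "i < q1" "x = v1 i" "j < q2" "y = v2 j"
  shows "pure_decomposition F \<Gamma> (q1 + q2) joined_v joined_copies joined_w
    (verts T1 \<union> verts T2, edges T1 \<union> edges T2 \<union> {{x, y}})"
proof unfold_locales
  let ?U = "unit_verts joined_v joined_copies"
  show "1 \<le> q1 + q2" using P1.q_pos by simp
  show "inj_on joined_v {..<q1 + q2}"
    using joined_units_disjoint unfolding inj_on_def
    by (metis unit_verts_joined lessThan_iff disjoint_iff P1.v_in_unit P2.v_in_unit joined_v_def)
  show "graph (joined_copies l)" "iso (joined_copies l) F" "joined_w l \<in> verts (joined_copies l)"
    if "l < q1 + q2" for l
    using that P1.copy_graph P1.copy_iso P1.w_in_copy P2.copy_graph P2.copy_iso P2.w_in_copy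
    by (simp_all add: joined_copies_def joined_w_def)
  have copy_in_unit: "verts (joined_copies l) \<subseteq> ?U l" for l by (auto simp: unit_verts_def)
  show "verts (joined_copies a) \<inter> verts (joined_copies b) = {}"
    if "a < q1 + q2" "b < q1 + q2" "a \<noteq> b" for a b
    using joined_units_disjoint[OF that] copy_in_unit[of a] copy_in_unit[of b] by blast
  show "joined_v b \<notin> verts (joined_copies a)" if "a < q1 + q2" "b < q1 + q2" for a b
  proof (cases "a = b")
    case True
    then show ?thesis
      using that P1.v_notin_copies P2.v_notin_copies by (simp add: joined_v_def joined_copies_def)
  next
    case False
    have "joined_v b \<in> ?U b" by (simp add: unit_verts_def)
    then show ?thesis using joined_units_disjoint[OF that False] copy_in_unit[of a] by blast
  qed
  show "graph (verts T1 \<union> verts T2, edges T1 \<union> edges T2 \<union> {{x, y}})"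
    "tree (verts T1 \<union> verts T2, edges T1 \<union> edges T2 \<union> {{x, y}})"
    using joined_tree[OF assms] by blast+
  show "verts (verts T1 \<union> verts T2, edges T1 \<union> edges T2 \<union> {{x, y}}) = joined_v ` {..<q1 + q2}"
    using P1.quotient_tree(3) P2.quotient_tree(3) image_joined_v by simp
  have "(\<Union>l<q1 + q2. ?U l) = verts \<Gamma>"
    by (simp add: UN_lessThan_add unit_verts_joined verts_\<Gamma> P1.verts_G P2.verts_G cong: SUP_cong_simp)
  moreover have "(\<Union>l<q1 + q2. unit_edges joined_v joined_copies joined_w l) =
      (\<Union>l<q1. unit_edges v1 Fs1 w1 l) \<union> (\<Union>l<q2. unit_edges v2 Fs2 w2 l)"
    by (simp add: UN_lessThan_add unit_edges_joined cong: SUP_cong_simp)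
  ultimately show "\<Gamma> = ((\<Union>l<q1 + q2. ?U l),
      edges (verts T1 \<union> verts T2, edges T1 \<union> edges T2 \<union> {{x, y}}) \<union>
      (\<Union>l<q1 + q2. unit_edges joined_v joined_copies joined_w l))"
    using \<Gamma>_eq P1.edges_G P2.edges_G by auto
qed
end

theorem lemma3p6:
  fixes F :: "'b graph" and \<Gamma>1 \<Gamma>2 :: "'a graph" and k m1 m2 :: nat and x y :: 'a
  assumes "k \<ge> 3"
    and "graph F" and "card (edges F) = k" and "dom_one F"
    and "pure_special m1 F \<Gamma>1" and "pure_special m2 F \<Gamma>2"
    and "verts \<Gamma>1 \<inter> verts \<Gamma>2 = {}"
    and "x \<in> verts \<Gamma>1" and "y \<in> verts \<Gamma>2"
    and "\<Gamma> = (verts \<Gamma>1 \<union> verts \<Gamma>2, edges \<Gamma>1 \<union> edges \<Gamma>2 \<union> {{x, y}})"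
    and "m = card (edges \<Gamma>)"
    and "real (iota \<Gamma> F) = real (m + 1) / real (k + 2)"
  shows "special m F \<Gamma>"
proof -
  obtain q1 v1 Fs1 w1 T1 q2 v2 Fs2 w2 T2 where
    "pure_decomposition F \<Gamma>1 q1 v1 Fs1 w1 T1" "pure_decomposition F \<Gamma>2 q2 v2 Fs2 w2 T2"
    using pure_decomposition_if_pure_special[OF assms(5)] pure_decomposition_if_pure_special[OF assms(6)]
    by metis
  then interpret J: pure_join F \<Gamma>1 q1 v1 Fs1 w1 T1 \<Gamma>2 q2 v2 Fs2 w2 T2 x y \<Gamma>
    using assms(1-4,7-10)
    by (simp add: pure_join_def pure_join_axioms_def pure_decomposition_dom_def pure_decomposition_dom_axioms_def)
  have iota: "iota \<Gamma> F * (k + 2) = m + 1"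
  proof -
    have "real (iota \<Gamma> F * (k + 2)) = real (m + 1)" using assms(12) by (simp add: field_simps)
    then show ?thesis by (simp only: of_nat_eq_iff)
  qed
  moreover have lower: "(q1 + q2) * (k + 2) \<le> m + 1" using J.card_edges_lower assms(3,11) by simp
  ultimately have "q1 + q2 \<le> iota \<Gamma> F" by (metis mult_right_le_imp_le zero_less_Suc add_2_eq_Suc')
  then obtain v1' Fs1' w1' T1' i v2' Fs2' w2' T2' j
    where J': "pure_join F \<Gamma>1 q1 v1' Fs1' w1' T1' \<Gamma>2 q2 v2' Fs2' w2' T2' x y \<Gamma>"
      and roots: "i < q1" "x = v1' i" "j < q2" "y = v2' j"
    by (rule J.roots_if_iota_large)
  have "iota \<Gamma> F \<le> q1 + q2" using pure_join.iota_le_if_root[OF J' roots(1,2)] .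
  then have "m + 1 = (q1 + q2) * (card (edges F) + 2)"
    using iota lower assms(3) by (metis le_antisym mult_le_mono1)
  then show ?thesis
    using pure_decomposition.special_if_size[OF pure_join.join_decomposition[OF J' roots]] by blast
qed

end
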